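(* Let $q$ be an odd prime power, $s\ge 1$, and $E,F\subset\mathbb{F}_q^s$. Then \begin{align*} \sum_{j \in \mathbb{F}_q} \nu(j)^2 & \le \frac{(\#E)^2(\#F)^2}{q} + q^{s-1} (\#E)(\#F) + q^{3s} \left|\sigma_{E,F}(0)\right|^2 + q^{3s} \sum_{r \in \mathbb{F}_q^*} \sigma_E(r) \sigma_F(r)\\ & \le \frac{(\#E)^2(\#F)^2}{q} + q^{3s} \sum_{r \in \mathbb{F}_q} \sigma_E(r) \sigma_F(r) + q^{s-1} (\#E)(\#F). \end{align*}
   Context: $\mathbb{F}_q$ is the finite field with $q$ elements ($q$ odd), $\mathbb{F}_q^*=\mathbb{F}_q\setminus\{0\}$. Fix a nontrivial additive character $\psi$ of $\mathbb{F}_q$. For $f:\mathbb{F}_q^s\to\mathbb{C}$, $\hat f(\mathbf{x})=q^{-s}\sum_{\mathbf{m}\in\mathbb{F}_q^s}\psi(-\mathbf{m}\cdot\mathbf{x})f(\mathbf{m})$. Sets are identified with their indicator functions. $|\mathbf{x}|^2=\sum_ix_i^2$. $\nu(j)=\#\{(\mathbf{x},\mathbf{y})\in E\times F: |\mathbf{x}-\mathbf{y}|^2=j\}$. $\sigma_E(r)=\sum_{\mathbf{a}:|\mathbf{a}|^2=r}|\hat E(\mathbf{a})|^2$, similarly $\sigma_F$, and $\sigma_{E,F}(r)=\sum_{\mathbf{m}:|\mathbf{m}|^2=r}\overline{\hat E(\mathbf{m})}\hat F(\mathbf{m})$. *)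

theory Defs
  imports Complex_Main "HOL-Library.Cardinality"
begin

text \<open>Vectors in F_q^s are functions 'n \<Rightarrow> 'a with 'n a finite index type, s = CARD('n).\<close>

definition add_char :: "('a::field \<Rightarrow> complex) \<Rightarrow> bool" where
  "add_char \<psi> \<longleftrightarrow> (\<forall>x y. \<psi> (x + y) = \<psi> x * \<psi> y) \<and> (\<forall>x. cmod (\<psi> x) = 1)"

definition nontrivial_add_char :: "('a::field \<Rightarrow> complex) \<Rightarrow> bool" where
  "nontrivial_add_char \<psi> \<longleftrightarrow> add_char \<psi> \<and> (\<exists>x. \<psi> x \<noteq> 1)"

definition dotp :: "('n::finite \<Rightarrow> 'a::field) \<Rightarrow> ('n \<Rightarrow> 'a) \<Rightarrow> 'a" where
  "dotp x y = (\<Sum>i\<in>UNIV. x i * y i)"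

definition normsq :: "('n::finite \<Rightarrow> 'a::field) \<Rightarrow> 'a" where
  "normsq x = (\<Sum>i\<in>UNIV. (x i)^2)"

definition fourier :: "('a::{finite,field} \<Rightarrow> complex) \<Rightarrow> (('n::finite \<Rightarrow> 'a) \<Rightarrow> complex)
    \<Rightarrow> ('n \<Rightarrow> 'a) \<Rightarrow> complex" where
  "fourier \<psi> f x = (1 / (of_nat CARD('a)) ^ CARD('n)) *
      (\<Sum>m\<in>UNIV. \<psi> (- dotp m x) * f m)"

definition ind :: "('n \<Rightarrow> 'a) set \<Rightarrow> ('n \<Rightarrow> 'a) \<Rightarrow> complex" where
  "ind E x = (if x \<in> E then 1 else 0)"

definition nu :: "('n::finite \<Rightarrow> 'a::{finite,field}) set \<Rightarrow> ('n \<Rightarrow> 'a) set \<Rightarrow> 'a \<Rightarrow> nat" where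
  "nu E F j = card {(x, y). x \<in> E \<and> y \<in> F \<and> normsq (x - y) = j}"

definition sigma :: "('a::{finite,field} \<Rightarrow> complex) \<Rightarrow> ('n::finite \<Rightarrow> 'a) set \<Rightarrow> 'a \<Rightarrow> real" where
  "sigma \<psi> E r = (\<Sum>a\<in>{a. normsq a = r}. (cmod (fourier \<psi> (ind E) a))^2)"

definition sigma2 :: "('a::{finite,field} \<Rightarrow> complex) \<Rightarrow> ('n::finite \<Rightarrow> 'a) set
    \<Rightarrow> ('n \<Rightarrow> 'a) set \<Rightarrow> 'a \<Rightarrow> complex" where
  "sigma2 \<psi> E F r = (\<Sum>m\<in>{m. normsq m = r}. cnj (fourier \<psi> (ind E) m) * fourier \<psi> (ind F) m)"

end

theory Submission
  imports Defs "HOL-Library.Function_Algebras" "HOL-Analysis.Convex"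
begin

(* Sum_j nu(j)^2 counts the quadruples (x, x', y, y') in E x E x F x F with
   |x - y|^2 = |x' - y'|^2.  Expanding Sum_r |sigma_{E,F}(r)|^2 gives, up to the factor q^(-4s),
   a sum over the same quadruples of K(x - y, x' - y'), where
   K(z, z') = Sum_{|m|^2 = |m'|^2} psi(m.z - m'.z').  Detecting |m|^2 = |m'|^2 by
   (1/q) Sum_t psi(t (|m|^2 - |m'|^2)) and completing the square in the terms with t <> 0
   (this is where q odd is needed) evaluates K exactly:
     K(z, z') = q^(2s-1) [z = z' = 0] + q^s [|z|^2 = |z'|^2] - q^(s-1).
   Hence Sum_j nu(j)^2 = |E|^2 |F|^2 / q - q^(s-1) |E /\ F|^2 + q^(3s) Sum_r |sigma_{E,F}(r)|^2,
   and both inequalities follow from Cauchy-Schwarz, |sigma_{E,F}(r)|^2 <= sigma_E(r) sigma_F(r);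
   the term q^(s-1) |E| |F| of the statement is slack. *)

lemma add_char_0: "add_char \<psi> \<Longrightarrow> \<psi> 0 = 1"
  unfolding add_char_def by (metis add_0 mult_cancel_right2 norm_zero zero_neq_one)

lemma add_char_add: "add_char \<psi> \<Longrightarrow> \<psi> (x + y) = \<psi> x * \<psi> y"
  unfolding add_char_def by blast

lemma add_char_neg:
  assumes "add_char \<psi>"
  shows "\<psi> (- x) = cnj (\<psi> x)"
proof -
  have "\<psi> x * \<psi> (- x) = 1"
    using add_char_add[OF assms, of x "- x"] add_char_0[OF assms] by simp
  moreover have "\<psi> x * cnj (\<psi> x) = 1"
    using assms unfolding add_char_def by (metis complex_norm_square of_real_1 power_one)
  ultimately show ?thesis by (metis mult_cancel_left mult_zero_left zero_neq_one)
qed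

lemma add_char_diff: "add_char \<psi> \<Longrightarrow> \<psi> (x - y) = \<psi> x * cnj (\<psi> y)"
  using add_char_add[of \<psi> x "- y"] add_char_neg[of \<psi> y] by simp

lemma nontrivial_add_charD:
  assumes "nontrivial_add_char \<psi>"
  shows "add_char \<psi>" and "\<exists>a. \<psi> a \<noteq> 1"
  using assms unfolding nontrivial_add_char_def by blast+

lemma sum_UNIV_translate:
  fixes f :: "'g::{finite,ab_group_add} \<Rightarrow> 'b::comm_monoid_add"
  shows "(\<Sum>x\<in>UNIV. f x) = (\<Sum>x\<in>UNIV. f (a + x))"
  by (rule sum.reindex_bij_witness[of _ "\<lambda>x. a + x" "\<lambda>x. x - a"]) auto

lemma sum_nontrivial_hom_eq_0:
  fixes \<chi> :: "'g::{finite,ab_group_add} \<Rightarrow> 'b::idom"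
  assumes "\<And>x y. \<chi> (x + y) = \<chi> x * \<chi> y" and "\<chi> g \<noteq> 1"
  shows "(\<Sum>x\<in>UNIV. \<chi> x) = 0"
proof -
  have "(\<Sum>x\<in>UNIV. \<chi> x) = (\<Sum>x\<in>UNIV. \<chi> (g + x))"
    by (rule sum_UNIV_translate)
  also have "\<dots> = \<chi> g * (\<Sum>x\<in>UNIV. \<chi> x)"
    by (simp add: assms(1) sum_distrib_left mult.commute)
  finally have "(1 - \<chi> g) * (\<Sum>x\<in>UNIV. \<chi> x) = 0"
    by (simp add: algebra_simps)
  with assms(2) show ?thesis by simp
qed

lemma sum_add_char_mult:
  fixes \<psi> :: "'a::{finite,field} \<Rightarrow> complex"
  assumes "nontrivial_add_char \<psi>"
  shows "(\<Sum>t\<in>UNIV. \<psi> (c * t)) = (if c = 0 then of_nat CARD('a) else 0)"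
proof (cases "c = 0")
  case True
  then show ?thesis using add_char_0 nontrivial_add_charD(1)[OF assms] by simp
next
  case False
  obtain a where a: "\<psi> a \<noteq> 1" using nontrivial_add_charD(2)[OF assms] by blast
  have "(\<Sum>t\<in>UNIV. \<psi> (c * t)) = 0"
  proof (rule sum_nontrivial_hom_eq_0[where g = "a / c"])
    show "\<psi> (c * (x + y)) = \<psi> (c * x) * \<psi> (c * y)" for x y
      using add_char_add[OF nontrivial_add_charD(1)[OF assms]] by (simp add: distrib_left)
    show "\<psi> (c * (a / c)) \<noteq> 1" using a False by simp
  qed
  with False show ?thesis by simp
qed

lemma eq_indicator_add_char:
  fixes \<psi> :: "'a::{finite,field} \<Rightarrow> complex"
  assumes "nontrivial_add_char \<psi>"
  shows "(if a = b then w else 0) = (\<Sum>t\<in>UNIV. \<psi> (t * (a - b)) * w) / of_nat CARD('a)"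
proof -
  have "(\<Sum>t\<in>UNIV. \<psi> (t * (a - b)) * w) = (\<Sum>t\<in>UNIV. \<psi> ((a - b) * t)) * w"
    by (simp only: sum_distrib_right[symmetric] mult.commute[of _ "a - b"])
  then show ?thesis by (simp add: sum_add_char_mult[OF assms])
qed

lemma of_nat_CARD_eq_0: "(of_nat CARD('g) :: 'g::{finite,ring_1}) = 0"
proof -
  have "(\<Sum>x\<in>UNIV. x) = (\<Sum>x\<in>UNIV. 1 + x :: 'g)"
    by (rule sum_UNIV_translate)
  then show ?thesis by (simp add: sum.distrib)
qed

lemma two_neq_zero_if_odd_card:
  assumes "odd CARD('a::{finite,field})"
  shows "(2::'a) \<noteq> 0"
proof
  assume two: "(2::'a) = 0"
  obtain k where "CARD('a) = 2 * k + 1" using assms oddE by blast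
  then have "1 + (2::'a) * of_nat k = 0"
    using of_nat_CARD_eq_0[where 'g = 'a] by simp
  with two show False by simp
qed

lemma sum_add_char_reciprocal:
  fixes \<psi> :: "'a::{finite,field} \<Rightarrow> complex"
  assumes \<psi>: "nontrivial_add_char \<psi>" and two: "(2::'a) \<noteq> 0"
  shows "(\<Sum>t\<in>UNIV-{0}. \<psi> (D / (4 * t))) = (if D = 0 then of_nat CARD('a) else 0) - 1"
proof -
  have four: "(4::'a) \<noteq> 0" using two by (metis mult_2 mult_eq_0_iff numeral_Bit0)
  have "(\<Sum>t\<in>UNIV-{0}. \<psi> (D / (4 * t))) = (\<Sum>u\<in>UNIV-{0}. \<psi> (D * u))"
    by (rule sum.reindex_bij_witness[of _ "\<lambda>t. 1 / (4 * t)" "\<lambda>t. 1 / (4 * t)"])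
      (use four in \<open>auto simp: field_simps\<close>)
  also have "\<dots> = (\<Sum>u\<in>UNIV. \<psi> (D * u)) - \<psi> 0"
    by (simp add: sum_diff1)
  finally show ?thesis
    using sum_add_char_mult[OF \<psi>, of D] add_char_0[OF nontrivial_add_charD(1)[OF \<psi>]] by simp
qed

lemma dotp_add_left: "dotp (x + y) v = dotp x v + dotp y v"
  unfolding dotp_def by (simp add: distrib_right sum.distrib)

lemma dotp_diff_right: "dotp v (x - y) = dotp v x - dotp v y"
  unfolding dotp_def by (simp add: right_diff_distrib sum_subtractf)

lemma dotp_commute: "dotp x y = dotp y x"
  unfolding dotp_def by (simp add: mult.commute)

lemma sum_add_char_dotp:
  fixes \<psi> :: "'a::{finite,field} \<Rightarrow> complex" and v :: "'n::finite \<Rightarrow> 'a"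
  assumes "nontrivial_add_char \<psi>"
  shows "(\<Sum>m\<in>UNIV. \<psi> (dotp m v)) = (if v = 0 then of_nat CARD('a) ^ CARD('n) else 0)"
proof (cases "v = 0")
  case True
  then show ?thesis
    using add_char_0 nontrivial_add_charD(1)[OF assms] by (simp add: dotp_def card_fun)
next
  case False
  obtain a where a: "\<psi> a \<noteq> 1" using nontrivial_add_charD(2)[OF assms] by blast
  obtain i where i: "v i \<noteq> 0" using False by (auto simp: zero_fun_def)
  have "(\<Sum>m\<in>UNIV. \<psi> (dotp m v)) = 0"
  proof (rule sum_nontrivial_hom_eq_0[where g = "\<lambda>j. if j = i then a / v i else 0"])
    show "\<psi> (dotp (x + y) v) = \<psi> (dotp x v) * \<psi> (dotp y v)" for x y
      using add_char_add[OF nontrivial_add_charD(1)[OF assms]] by (simp add: dotp_add_left)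
    have "dotp (\<lambda>j. if j = i then a / v i else 0) v = a"
      using i unfolding dotp_def by (simp add: if_distrib[of "\<lambda>x. x * _"] cong: if_cong)
    with a show "\<psi> (dotp (\<lambda>j. if j = i then a / v i else 0) v) \<noteq> 1" by simp
  qed
  with False show ?thesis by simp
qed

lemma quadratic_phase_shift:
  fixes m d z z' :: "'n::finite \<Rightarrow> 'a::field"
  shows "t * (normsq (m + d) - normsq m) + dotp (m + d) z - dotp m z'
    = dotp m (\<lambda>i. 2 * t * d i + z i - z' i) + (t * normsq d + dotp d z)"
  unfolding normsq_def dotp_def
  by (simp add: sum_distrib_left sum_subtractf[symmetric] sum.distrib[symmetric]
      power2_eq_square algebra_simps)

lemma quadratic_phase_critical_value:
  fixes z z' :: "'n::finite \<Rightarrow> 'a::field"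
  assumes "(2::'a) \<noteq> 0" and "t \<noteq> 0"
  shows "t * normsq (\<lambda>i. (z' i - z i) / (2 * t)) + dotp (\<lambda>i. (z' i - z i) / (2 * t)) z
     = (normsq z' - normsq z) / (4 * t)"
proof -
  have "(4::'a) \<noteq> 0" "(8::'a) \<noteq> 0"
    using assms(1) by (metis mult_2 mult_eq_0_iff numeral_Bit0)+
  then have "t * ((b - a) / (2 * t))^2 + (b - a) / (2 * t) * a = (b^2 - a^2) / (4 * t)" for a b :: 'a
    using assms by (simp add: field_simps power2_eq_square)
  then show ?thesis
    unfolding normsq_def dotp_def
    by (simp add: sum_distrib_left sum_divide_distrib sum.distrib[symmetric] sum_subtractf[symmetric])
qed

(* Substituting m = m' + d makes the phase affine in m'; the sum over m' then vanishes
   unless d is the critical point d0 of the quadratic phase. *)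
lemma sum_quadratic_phase:
  fixes \<psi> :: "'a::{finite,field} \<Rightarrow> complex" and z z' :: "'n::finite \<Rightarrow> 'a"
  assumes \<psi>: "nontrivial_add_char \<psi>" and two: "(2::'a) \<noteq> 0" and t: "t \<noteq> 0"
  shows "(\<Sum>m\<in>UNIV. \<Sum>m'\<in>UNIV. \<psi> (t * (normsq m - normsq m') + dotp m z - dotp m' z'))
    = of_nat CARD('a) ^ CARD('n) * \<psi> ((normsq z' - normsq z) / (4 * t))"
proof -
  note add = add_char_add[OF nontrivial_add_charD(1)[OF \<psi>]]
  define w where "w d = (\<lambda>i. 2 * t * d i + z i - z' i)" for d :: "'n \<Rightarrow> 'a"
  define c where "c d = t * normsq d + dotp d z" for d :: "'n \<Rightarrow> 'a"
  define d\<^sub>0 where "d\<^sub>0 = (\<lambda>i. (z' i - z i) / (2 * t))"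
  have w_eq_0: "w d = 0 \<longleftrightarrow> d = d\<^sub>0" for d
    using two t by (auto simp: w_def d\<^sub>0_def fun_eq_iff field_simps)
  have "(\<Sum>m\<in>UNIV. \<Sum>m'\<in>UNIV. \<psi> (t * (normsq m - normsq m') + dotp m z - dotp m' z'))
     = (\<Sum>m'\<in>UNIV. \<Sum>d\<in>UNIV. \<psi> (t * (normsq (m' + d) - normsq m') + dotp (m' + d) z - dotp m' z'))"
    by (subst sum.swap) (rule sum.cong[OF refl], rule sum_UNIV_translate)
  also have "\<dots> = (\<Sum>d\<in>UNIV. \<psi> (c d) * (\<Sum>m'\<in>UNIV. \<psi> (dotp m' (w d))))"
    unfolding quadratic_phase_shift add w_def c_def
    by (subst sum.swap) (simp add: sum_distrib_left mult.commute)
  also have "\<dots> = \<psi> (c d\<^sub>0) * of_nat CARD('a) ^ CARD('n)"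
    by (simp add: sum_add_char_dotp[OF \<psi>] w_eq_0 if_distrib cong: if_cong)
  also have "c d\<^sub>0 = (normsq z' - normsq z) / (4 * t)"
    unfolding c_def d\<^sub>0_def by (rule quadratic_phase_critical_value[OF two t])
  finally show ?thesis by (simp add: mult.commute)
qed

definition sphere_kernel ::
    "('a::{finite,field} \<Rightarrow> complex) \<Rightarrow> ('n::finite \<Rightarrow> 'a) \<Rightarrow> ('n \<Rightarrow> 'a) \<Rightarrow> complex" where
  "sphere_kernel \<psi> z z' =
    (\<Sum>m\<in>UNIV. \<Sum>m'\<in>UNIV. if normsq m = normsq m' then \<psi> (dotp m z - dotp m' z') else 0)"

lemma sphere_kernel_eq:
  fixes \<psi> :: "'a::{finite,field} \<Rightarrow> complex" and z z' :: "'n::finite \<Rightarrow> 'a"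
  assumes \<psi>: "nontrivial_add_char \<psi>" and two: "(2::'a) \<noteq> 0"
  shows "sphere_kernel \<psi> z z' = of_real
    ((real CARD('a) ^ CARD('n))^2 / real CARD('a) * (if z = 0 \<and> z' = 0 then 1 else 0)
      + real CARD('a) ^ CARD('n) * (if normsq z = normsq z' then 1 else 0)
      - real CARD('a) ^ CARD('n) / real CARD('a))"
proof -
  note char = nontrivial_add_charD(1)[OF \<psi>]
  let ?Q = "of_nat CARD('a) :: complex"
  define \<Phi> where "\<Phi> t m m' = \<psi> (t * (normsq m - normsq m') + dotp m z - dotp m' z')" for t m m'
  define G where "G t = (\<Sum>m\<in>UNIV. \<Sum>m'\<in>UNIV. \<Phi> t m m')" for t
  have indicator: "(if normsq m = normsq m' then \<psi> (dotp m z - dotp m' z') else 0)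
      = (\<Sum>t\<in>UNIV. \<Phi> t m m') / ?Q" for m m'
    unfolding eq_indicator_add_char[OF \<psi>] \<Phi>_def
    by (simp add: add_diff_eq[symmetric] add_char_add[OF char])
  have "sphere_kernel \<psi> z z' = (\<Sum>m\<in>UNIV. \<Sum>m'\<in>UNIV. \<Sum>t\<in>UNIV. \<Phi> t m m') / ?Q"
    unfolding sphere_kernel_def indicator by (simp add: sum_divide_distrib)
  also have "(\<Sum>m\<in>UNIV. \<Sum>m'\<in>UNIV. \<Sum>t\<in>UNIV. \<Phi> t m m') = (\<Sum>m\<in>UNIV. \<Sum>t\<in>UNIV. \<Sum>m'\<in>UNIV. \<Phi> t m m')"
    by (rule sum.cong[OF refl], rule sum.swap)
  also have "\<dots> = (\<Sum>t\<in>UNIV. G t)"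
    unfolding G_def by (rule sum.swap)
  also have "\<dots> = G 0 + (\<Sum>t\<in>UNIV-{0}. G t)"
    by (simp add: sum.remove)
  also have "G 0 = (\<Sum>m\<in>UNIV. \<psi> (dotp m z)) * cnj (\<Sum>m'\<in>UNIV. \<psi> (dotp m' z'))"
    unfolding G_def \<Phi>_def sum_product cnj_sum by (simp add: add_char_diff[OF char])
  also have "\<dots> = (?Q ^ CARD('n))^2 * (if z = 0 \<and> z' = 0 then 1 else 0)"
    unfolding sum_add_char_dotp[OF \<psi>] by (simp add: power2_eq_square)
  also have "(\<Sum>t\<in>UNIV-{0}. G t) = (\<Sum>t\<in>UNIV-{0}. ?Q ^ CARD('n) * \<psi> ((normsq z' - normsq z) / (4 * t)))"
    unfolding G_def \<Phi>_def by (intro sum.cong refl sum_quadratic_phase[OF \<psi> two]) simp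
  also have "\<dots> = ?Q ^ CARD('n) * ((if normsq z = normsq z' then ?Q else 0) - 1)"
    unfolding sum_distrib_left[symmetric] sum_add_char_reciprocal[OF \<psi> two] by simp
  finally have "sphere_kernel \<psi> z z' = ((?Q ^ CARD('n))^2 * (if z = 0 \<and> z' = 0 then 1 else 0)
      + ?Q ^ CARD('n) * ((if normsq z = normsq z' then ?Q else 0) - 1)) / ?Q" .
  then show ?thesis
    by (simp add: diff_divide_distrib add_divide_distrib right_diff_distrib)
qed

lemma sum_fibre_products:
  fixes h :: "'b \<Rightarrow> 'c::finite" and a b :: "'b \<Rightarrow> 'd::comm_semiring_1"
  assumes "finite A"
  shows "(\<Sum>r\<in>UNIV. (\<Sum>m\<in>{m\<in>A. h m = r}. a m) * (\<Sum>m'\<in>{m'\<in>A. h m' = r}. b m'))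
    = (\<Sum>m\<in>A. \<Sum>m'\<in>A. if h m = h m' then a m * b m' else 0)"
proof -
  have "(\<Sum>r\<in>UNIV. (\<Sum>m\<in>{m\<in>A. h m = r}. a m) * (\<Sum>m'\<in>{m'\<in>A. h m' = r}. b m'))
      = (\<Sum>r\<in>UNIV. \<Sum>m\<in>{m\<in>A. h m = r}. a m * (\<Sum>m'\<in>{m'\<in>A. h m' = h m}. b m'))"
    by (auto simp: sum_distrib_right intro!: sum.cong)
  also have "\<dots> = (\<Sum>m\<in>A. a m * (\<Sum>m'\<in>{m'\<in>A. h m' = h m}. b m'))"
    using assms by (intro sum.group) auto
  also have "\<dots> = (\<Sum>m\<in>A. \<Sum>m'\<in>A. if h m = h m' then a m * b m' else 0)"
    using assms by (simp add: sum_distrib_left sum.inter_filter eq_commute if_distrib cong: if_cong)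
  finally show ?thesis .
qed

lemma card_diagonal: "card {p \<in> E \<times> F. fst p = snd p} = card (E \<inter> F)"
proof -
  have "bij_betw (\<lambda>x. (x, x)) (E \<inter> F) {p \<in> E \<times> F. fst p = snd p}"
    by (auto simp: bij_betw_def inj_on_def image_iff)
  then show ?thesis by (simp add: bij_betw_same_card)
qed

lemma sum_diagonal_indicator:
  assumes "finite E" and "finite F"
  shows "(\<Sum>p\<in>E \<times> F. \<Sum>p'\<in>E \<times> F. if fst p = snd p \<and> fst p' = snd p' then 1 else 0)
    = real (card (E \<inter> F))^2"
proof -
  have "(\<Sum>p\<in>E \<times> F. \<Sum>p'\<in>E \<times> F. if fst p = snd p \<and> fst p' = snd p' then 1 else 0)
      = (\<Sum>p\<in>E \<times> F. if fst p = snd p then 1 else 0) * (\<Sum>p'\<in>E \<times> F. if fst p' = snd p' then 1 else (0::real))"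
    unfolding sum_product by (intro sum.cong refl) simp
  also have "(\<Sum>p\<in>E \<times> F. if fst p = snd p then 1 else (0::real)) = real (card (E \<inter> F))"
    using assms by (simp add: sum.inter_filter[symmetric] card_diagonal)
  finally show ?thesis by (simp add: power2_eq_square)
qed

lemma sum_nu_squared:
  fixes E F :: "('n::finite \<Rightarrow> 'a::{finite,field}) set"
  shows "(\<Sum>j\<in>UNIV. real (nu E F j)^2) = (\<Sum>p\<in>E \<times> F. \<Sum>p'\<in>E \<times> F.
      if normsq (fst p - snd p) = normsq (fst p' - snd p') then 1 else 0)"
proof -
  have "{(x, y). x \<in> E \<and> y \<in> F \<and> normsq (x - y) = j} = {p \<in> E \<times> F. normsq (fst p - snd p) = j}" for j
    by auto
  then have "real (nu E F j) = (\<Sum>p\<in>{p \<in> E \<times> F. normsq (fst p - snd p) = j}. 1)" for j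
    by (simp add: nu_def)
  then show ?thesis
    using sum_fibre_products[where A = "E \<times> F" and h = "\<lambda>p. normsq (fst p - snd p)"
        and a = "\<lambda>_. 1::real" and b = "\<lambda>_. 1"]
    by (simp add: power2_eq_square cong: if_cong)
qed

lemma fourier_ind:
  "fourier \<psi> (ind E) m = (\<Sum>x\<in>E. \<psi> (- dotp x m)) / of_nat CARD('a) ^ CARD('n)"
  for \<psi> :: "'a::{finite,field} \<Rightarrow> complex" and E :: "('n::finite \<Rightarrow> 'a) set"
  unfolding fourier_def ind_def by (simp add: sum.If_cases if_distrib[of "\<lambda>x. _ * x"] cong: if_cong)

lemma cnj_fourier_ind_mult:
  fixes \<psi> :: "'a::{finite,field} \<Rightarrow> complex" and E F :: "('n::finite \<Rightarrow> 'a) set"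
  assumes "add_char \<psi>"
  shows "cnj (fourier \<psi> (ind E) m) * fourier \<psi> (ind F) m
    = (\<Sum>p\<in>E \<times> F. \<psi> (dotp m (fst p - snd p))) / (of_nat CARD('a) ^ CARD('n))^2"
  unfolding fourier_ind dotp_diff_right
  by (simp add: add_char_neg[OF assms] add_char_diff[OF assms] dotp_commute sum_product
      sum.cartesian_product case_prod_unfold power2_eq_square)

lemma sum_swap_nested:
  "(\<Sum>a\<in>A. \<Sum>b\<in>B. \<Sum>c\<in>C. \<Sum>d\<in>D. g a b c d) = (\<Sum>c\<in>C. \<Sum>d\<in>D. \<Sum>a\<in>A. \<Sum>b\<in>B. g a b c d)"
proof -
  have "(\<Sum>a\<in>A. \<Sum>b\<in>B. \<Sum>c\<in>C. \<Sum>d\<in>D. g a b c d) = (\<Sum>a\<in>A. \<Sum>c\<in>C. \<Sum>b\<in>B. \<Sum>d\<in>D. g a b c d)"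
    by (intro sum.cong refl sum.swap)
  also have "\<dots> = (\<Sum>a\<in>A. \<Sum>c\<in>C. \<Sum>d\<in>D. \<Sum>b\<in>B. g a b c d)"
    by (intro sum.cong refl sum.swap)
  also have "\<dots> = (\<Sum>c\<in>C. \<Sum>a\<in>A. \<Sum>d\<in>D. \<Sum>b\<in>B. g a b c d)"
    by (rule sum.swap)
  also have "\<dots> = (\<Sum>c\<in>C. \<Sum>d\<in>D. \<Sum>a\<in>A. \<Sum>b\<in>B. g a b c d)"
    by (intro sum.cong refl sum.swap)
  finally show ?thesis .
qed

lemma sum_sigma2_norm_squared:
  fixes \<psi> :: "'a::{finite,field} \<Rightarrow> complex" and E F :: "('n::finite \<Rightarrow> 'a) set"
  assumes \<psi>: "add_char \<psi>"
  shows "(\<Sum>r\<in>UNIV. complex_of_real ((cmod (sigma2 \<psi> E F r))^2))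
    = (\<Sum>p\<in>E \<times> F. \<Sum>p'\<in>E \<times> F. sphere_kernel \<psi> (fst p - snd p) (fst p' - snd p'))
        / (of_nat CARD('a) ^ CARD('n))^4"
proof -
  define c :: complex where "c = (of_nat CARD('a) ^ CARD('n))^2"
  define T where "T m = (\<Sum>p\<in>E \<times> F. \<psi> (dotp m (fst p - snd p)))" for m
  have sigma2_eq: "sigma2 \<psi> E F r = (\<Sum>m\<in>{m\<in>UNIV. normsq m = r}. T m) / c" for r
    unfolding sigma2_def cnj_fourier_ind_mult[OF \<psi>] T_def c_def by (simp add: sum_divide_distrib)
  have T_cnj: "(if normsq m = normsq m' then T m * cnj (T m') else 0) = (\<Sum>p\<in>E \<times> F. \<Sum>p'\<in>E \<times> F.
      if normsq m = normsq m' then \<psi> (dotp m (fst p - snd p) - dotp m' (fst p' - snd p')) else 0)" for m m'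
    unfolding T_def cnj_sum sum_product add_char_diff[OF \<psi>] by simp
  have "(\<Sum>r\<in>UNIV. complex_of_real ((cmod (sigma2 \<psi> E F r))^2))
      = (\<Sum>r\<in>UNIV. (\<Sum>m\<in>{m\<in>UNIV. normsq m = r}. T m) * (\<Sum>m'\<in>{m'\<in>UNIV. normsq m' = r}. cnj (T m'))) / c^2"
    unfolding complex_norm_square sigma2_eq c_def
    by (simp add: sum_divide_distrib[symmetric] times_divide_times_eq power2_eq_square)
  also have "\<dots> = (\<Sum>m\<in>UNIV. \<Sum>m'\<in>UNIV. if normsq m = normsq m' then T m * cnj (T m') else 0) / c^2"
    by (simp only: sum_fibre_products finite)
  also have "\<dots> = (\<Sum>m\<in>UNIV. \<Sum>m'\<in>UNIV. \<Sum>p\<in>E \<times> F. \<Sum>p'\<in>E \<times> F.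
      if normsq m = normsq m' then \<psi> (dotp m (fst p - snd p) - dotp m' (fst p' - snd p')) else 0) / c^2"
    unfolding T_cnj ..
  also have "\<dots> = (\<Sum>p\<in>E \<times> F. \<Sum>p'\<in>E \<times> F. sphere_kernel \<psi> (fst p - snd p) (fst p' - snd p')) / c^2"
    unfolding sphere_kernel_def by (subst sum_swap_nested) (rule refl)
  finally show ?thesis by (simp add: c_def power_mult[symmetric] mult.commute)
qed

lemma sum_nu_squared_eq:
  fixes \<psi> :: "'a::{finite,field} \<Rightarrow> complex" and E F :: "('n::finite \<Rightarrow> 'a) set"
  assumes \<psi>: "nontrivial_add_char \<psi>" and two: "(2::'a) \<noteq> 0"
  shows "(\<Sum>j\<in>UNIV. real (nu E F j)^2)
    = real (card E)^2 * real (card F)^2 / real CARD('a)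
      - real CARD('a) ^ CARD('n) / real CARD('a) * real (card (E \<inter> F))^2
      + real CARD('a) ^ (3 * CARD('n)) * (\<Sum>r\<in>UNIV. (cmod (sigma2 \<psi> E F r))^2)"
proof -
  define Q where "Q = real CARD('a)"
  define P where "P = Q ^ CARD('n)"
  let ?D = "\<lambda>p. fst p - snd p"
  have "Q > 0" "P > 0" by (simp_all add: P_def Q_def)
  have "complex_of_real (\<Sum>r\<in>UNIV. (cmod (sigma2 \<psi> E F r))^2)
      = complex_of_real ((\<Sum>p\<in>E \<times> F. \<Sum>p'\<in>E \<times> F.
          P^2 / Q * (if ?D p = 0 \<and> ?D p' = 0 then 1 else 0)
          + P * (if normsq (?D p) = normsq (?D p') then 1 else 0) - P / Q) / P^4)"
    unfolding of_real_sum sum_sigma2_norm_squared[OF nontrivial_add_charD(1)[OF \<psi>]]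
      sphere_kernel_eq[OF \<psi> two]
    by (simp add: P_def Q_def)
  then have "(\<Sum>r\<in>UNIV. (cmod (sigma2 \<psi> E F r))^2)
      = (\<Sum>p\<in>E \<times> F. \<Sum>p'\<in>E \<times> F.
          P^2 / Q * (if ?D p = 0 \<and> ?D p' = 0 then 1 else 0)
          + P * (if normsq (?D p) = normsq (?D p') then 1 else 0) - P / Q) / P^4"
    by (simp only: of_real_eq_iff)
  also have "\<dots> = (P^2 / Q * real (card (E \<inter> F))^2 + P * (\<Sum>j\<in>UNIV. real (nu E F j)^2)
          - P / Q * (real (card E)^2 * real (card F)^2)) / P^4"
    unfolding sum_diagonal_indicator[OF finite finite, symmetric] sum_nu_squared
    by (simp add: sum.distrib sum_subtractf sum_distrib_left sum_divide_distrib card_cartesian_product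
        power2_eq_square)
  finally have sum_norm_squared: "(\<Sum>r\<in>UNIV. (cmod (sigma2 \<psi> E F r))^2) = (P^2 / Q * real (card (E \<inter> F))^2
      + P * (\<Sum>j\<in>UNIV. real (nu E F j)^2) - P / Q * (real (card E)^2 * real (card F)^2)) / P^4" .
  have "real CARD('a) ^ (3 * CARD('n)) = P^3"
    by (simp add: P_def Q_def power_mult[symmetric] mult.commute)
  with \<open>Q > 0\<close> \<open>P > 0\<close> show ?thesis
    unfolding Q_def[symmetric] P_def[symmetric] sum_norm_squared by (simp add: field_simps eval_nat_numeral)
qed

lemma norm_sigma2_squared_le:
  fixes \<psi> :: "'a::{finite,field} \<Rightarrow> complex" and E F :: "('n::finite \<Rightarrow> 'a) set"
  shows "(cmod (sigma2 \<psi> E F r))^2 \<le> sigma \<psi> E r * sigma \<psi> F r"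
proof -
  let ?S = "{m :: 'n \<Rightarrow> 'a. normsq m = r}"
  let ?a = "\<lambda>m. cmod (fourier \<psi> (ind E) m)" and ?b = "\<lambda>m. cmod (fourier \<psi> (ind F) m)"
  have "cmod (sigma2 \<psi> E F r) \<le> (\<Sum>m\<in>?S. ?a m * ?b m)"
    unfolding sigma2_def by (rule order_trans[OF norm_sum]) (simp add: norm_mult)
  then have "(cmod (sigma2 \<psi> E F r))^2 \<le> (\<Sum>m\<in>?S. ?a m * ?b m)^2"
    by (rule power_mono) simp
  also have "\<dots> \<le> (\<Sum>m\<in>?S. (?a m)^2) * (\<Sum>m\<in>?S. (?b m)^2)"
    by (rule Cauchy_Schwarz_ineq_sum)
  finally show ?thesis unfolding sigma_def .
qed

theorem lemma7:
  fixes \<psi> :: "'a::{finite,field} \<Rightarrow> complex"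
    and E F :: "('n::finite \<Rightarrow> 'a) set"
  assumes "odd CARD('a)"
    and "nontrivial_add_char \<psi>"
  defines "q \<equiv> real CARD('a)" and "s \<equiv> CARD('n)"
  shows "((\<Sum>j\<in>UNIV. real (nu E F j)^2)
      \<le> real (card E)^2 * real (card F)^2 / q + q^(s-1) * real (card E) * real (card F)
        + q^(3*s) * (cmod (sigma2 \<psi> E F 0))^2
        + q^(3*s) * (\<Sum>r\<in>UNIV-{0}. sigma \<psi> E r * sigma \<psi> F r))
    \<and> (real (card E)^2 * real (card F)^2 / q + q^(s-1) * real (card E) * real (card F)
        + q^(3*s) * (cmod (sigma2 \<psi> E F 0))^2
        + q^(3*s) * (\<Sum>r\<in>UNIV-{0}. sigma \<psi> E r * sigma \<psi> F r)
      \<le> real (card E)^2 * real (card F)^2 / q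
        + q^(3*s) * (\<Sum>r\<in>UNIV. sigma \<psi> E r * sigma \<psi> F r)
        + q^(s-1) * real (card E) * real (card F))"
proof -
  have q: "q > 0"
    by (simp add: q_def)
  have "0 \<le> q^s / q * real (card (E \<inter> F))^2" and "0 \<le> q^(s-1) * real (card E) * real (card F)"
    using q by simp_all
  moreover have "(\<Sum>j\<in>UNIV. real (nu E F j)^2) = real (card E)^2 * real (card F)^2 / q
      - q^s / q * real (card (E \<inter> F))^2 + q^(3*s) * (cmod (sigma2 \<psi> E F 0))^2
      + q^(3*s) * (\<Sum>r\<in>UNIV-{0}. (cmod (sigma2 \<psi> E F r))^2)"
    using sum_nu_squared_eq[OF assms(2) two_neq_zero_if_odd_card[OF assms(1)], of E F]
      sum.remove[of UNIV 0 "\<lambda>r. (cmod (sigma2 \<psi> E F r))^2"]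
    by (simp add: q_def s_def distrib_left)
  moreover have "q^(3*s) * (\<Sum>r\<in>UNIV-{0}. (cmod (sigma2 \<psi> E F r))^2)
      \<le> q^(3*s) * (\<Sum>r\<in>UNIV-{0}. sigma \<psi> E r * sigma \<psi> F r)"
    using q by (intro mult_left_mono sum_mono norm_sigma2_squared_le) auto
  moreover have "q^(3*s) * (cmod (sigma2 \<psi> E F 0))^2 \<le> q^(3*s) * (sigma \<psi> E 0 * sigma \<psi> F 0)"
    using q by (intro mult_left_mono norm_sigma2_squared_le) auto
  moreover have "q^(3*s) * (\<Sum>r\<in>UNIV. sigma \<psi> E r * sigma \<psi> F r)
      = q^(3*s) * (sigma \<psi> E 0 * sigma \<psi> F 0) + q^(3*s) * (\<Sum>r\<in>UNIV-{0}. sigma \<psi> E r * sigma \<psi> F r)"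
    by (simp add: sum.remove distrib_left)
  ultimately show ?thesis by linarith
qed

end
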